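(* Let $\mathbf{X}=(X,\mu_X,\mathcal{S}_X)$ and $\mathbf{Y}=(Y,\mu_Y,\mathcal{S}_Y)$ be symmetry measure spaces whose measures take values in a common complete linearly ordered set. Suppose there is a function $f:X\to Y$ such that (i) for every $\mu_Y$-measurable set $B\subset Y$ the preimage $f^{-1}(B)$ is $\mu_X$-measurable and $\mu_X(f^{-1}(B))\le \mu_Y(B)$; (ii) for every $s_X\in\mathcal{S}_X$ there is $s_Y\in\mathcal{S}_Y$ with $s_Y\circ f=f\circ s_X$. Then $\mathrm{ms}_r(\mathbf{X})\le \mathrm{ms}_r(\mathbf{Y})$ for every cardinal $r$.
   Context: A measure on a set $X$ is a monotone function $\mu:\mathrm{dom}(\mu)\to[\mu(\emptyset),\mu(X)]$ defined on a $\sigma$-algebra $\mathrm{dom}(\mu)$ of subsets of $X$ (the measurable sets) with values in a complete linearly ordered set (every subset has an infimum and a supremum); monotone means $\mu(A)\le\mu(B)$ whenever $A\subset B$ are measurable. A symmetry measure space is a triple $(X,\mu,\mathcal{S})$ where $\mathcal{S}$ is a family of bijections $X\to X$ (admissible symmetries) with $s^{-1}\in\mathcal{S}$ for each $s\in\mathcal{S}$, and each $s\in\mathcal{S}$ is measure-preserving: $s(A)$ is measurable and $\mu(s(A))=\mu(A)$ for each measurable $A$. A set $A\subset X$ is $\mathcal{S}$-symmetric if $s(A)=A$ for some $s\in\mathcal{S}$. For measurable $A$, $\mathrm{ms}(A)=\sup\{\mu(B): B\subset A \text{ measurable and } \mathcal{S}\text{-symmetric}\}$. For a cardinal $r$,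 $\mathrm{ms}_r(\mathbf{X})=\inf_{\chi}\sup_{i\in r}\mathrm{ms}(\chi^{-1}(i))$, the infimum over all measurable colorings $\chi:X\to r$ (i.e. each $\chi^{-1}(i)$ is measurable). *)

theory Defs
  imports "HOL-Analysis.Analysis"
begin

definition gen_measure :: "'a set \<Rightarrow> 'a set set \<Rightarrow> ('a set \<Rightarrow> 'v::complete_linorder) \<Rightarrow> bool" where
  "gen_measure X M mu \<longleftrightarrow> sigma_algebra X M
     \<and> (\<forall>A\<in>M. \<forall>B\<in>M. A \<subseteq> B \<longrightarrow> mu A \<le> mu B)
     \<and> (\<forall>A\<in>M. mu {} \<le> mu A \<and> mu A \<le> mu X)"

definition sym_measure_space ::
  "'a set \<Rightarrow> 'a set set \<Rightarrow> ('a set \<Rightarrow> 'v::complete_linorder) \<Rightarrow> ('a \<Rightarrow> 'a) set \<Rightarrow> bool" where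
  "sym_measure_space X M mu S \<longleftrightarrow> gen_measure X M mu
     \<and> (\<forall>s\<in>S. bij_betw s X X)
     \<and> (\<forall>s\<in>S. \<exists>t\<in>S. \<forall>x\<in>X. t (s x) = x \<and> s (t x) = x)
     \<and> (\<forall>s\<in>S. \<forall>A\<in>M. s ` A \<in> M \<and> mu (s ` A) = mu A)"

definition S_symmetric :: "('a \<Rightarrow> 'a) set \<Rightarrow> 'a set \<Rightarrow> bool" where
  "S_symmetric S A \<longleftrightarrow> (\<exists>s\<in>S. s ` A = A)"

definition ms :: "'a set set \<Rightarrow> ('a set \<Rightarrow> 'v::complete_linorder) \<Rightarrow> ('a \<Rightarrow> 'a) set \<Rightarrow> 'a set \<Rightarrow> 'v" where
  "ms M mu S A = (SUP B \<in> {B. B \<subseteq> A \<and> B \<in> M \<and> S_symmetric S B}. mu B)"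

text \<open>Measurable colorings of X by the colour set R (a cardinal r is represented by an
  arbitrary set R of colours).\<close>
definition measurable_colorings :: "'a set \<Rightarrow> 'a set set \<Rightarrow> 'c set \<Rightarrow> ('a \<Rightarrow> 'c) set" where
  "measurable_colorings X M R = {col. col \<in> X \<rightarrow> R \<and> (\<forall>i\<in>R. {x\<in>X. col x = i} \<in> M)}"

definition ms_r :: "'a set \<Rightarrow> 'a set set \<Rightarrow> ('a set \<Rightarrow> 'v::complete_linorder) \<Rightarrow> ('a \<Rightarrow> 'a) set \<Rightarrow> 'c set \<Rightarrow> 'v" where
  "ms_r X M mu S R = (INF col \<in> measurable_colorings X M R. SUP i \<in> R. ms M mu S {x\<in>X. col x = i})"

end

theory Submission
  imports Defs
begin

text \<open>
  A measurable set that is symmetric under some \<open>s\<^sub>X\<close> is mapped by \<open>f\<close> onto a set invariant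
  under the matching \<open>s\<^sub>Y\<close>, but that image need not be measurable. It is, however, contained in
  the largest \<open>s\<^sub>Y\<close>-invariant subset of the target colour class, namely the intersection of all
  its translates under the powers of \<open>s\<^sub>Y\<close> and \<open>s\<^sub>Y\<^sup>-\<^sup>1\<close>; being a countable intersection of
  measurable sets this invariant core is measurable, so it witnesses the bound on \<open>ms\<close>
  for every colour class of a colouring of \<open>Y\<close>, and pulling colourings back along \<open>f\<close> gives the
  inequality between the infima.
\<close>

definition inverses_on :: "'a set \<Rightarrow> ('a \<Rightarrow> 'a) \<Rightarrow> ('a \<Rightarrow> 'a) \<Rightarrow> bool" where
  "inverses_on Y s t \<longleftrightarrow> (\<forall>y\<in>Y. s y \<in> Y \<and> t y \<in> Y \<and> t (s y) = y \<and> s (t y) = y)"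

lemma inverses_on_sym: "inverses_on Y s t \<Longrightarrow> inverses_on Y t s"
  unfolding inverses_on_def by auto

lemma inverses_on_funpow:
  assumes "inverses_on Y s t"
  shows "inverses_on Y (s^^n) (t^^n)"
proof (induction n)
  case 0 then show ?case by (simp add: inverses_on_def)
next
  case (Suc n)
  have "s^^Suc n = s \<circ> s^^n" and "t^^Suc n = t^^n \<circ> t"
    by (simp, rule funpow_Suc_right)
  then show ?case using Suc assms unfolding inverses_on_def by simp
qed

lemma vimage_eq_image_inverse:
  assumes "inverses_on Y s t" and "C \<subseteq> Y"
  shows "s -` C \<inter> Y = t ` C"
proof
  show "s -` C \<inter> Y \<subseteq> t ` C"
  proof clarify
    fix x assume "x \<in> Y" "s x \<in> C"
    moreover have "x = t (s x)" using \<open>x \<in> Y\<close> assms(1) unfolding inverses_on_def by simp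
    ultimately show "x \<in> t ` C" by blast
  qed
  show "t ` C \<subseteq> s -` C \<inter> Y" using assms unfolding inverses_on_def by auto
qed

lemma funpow_image_in_sets:
  assumes "\<And>A. A \<in> M \<Longrightarrow> s ` A \<in> M" and "C \<in> M"
  shows "(s^^n) ` C \<in> M"
proof (induction n)
  case 0 then show ?case using assms(2) by simp
next
  case (Suc n)
  then show ?case using assms(1)[of "(s^^n) ` C"] by (simp add: image_comp)
qed

lemma funpow_in_invariant:
  assumes "s ` E \<subseteq> E" and "x \<in> E"
  shows "(s^^n) x \<in> E"
  using assms by (induction n) auto

definition invariant_core :: "'a set \<Rightarrow> ('a \<Rightarrow> 'a) \<Rightarrow> ('a \<Rightarrow> 'a) \<Rightarrow> 'a set \<Rightarrow> 'a set" where
  "invariant_core Y s t C = {y\<in>Y. \<forall>n. (s^^n) y \<in> C \<and> (t^^n) y \<in> C}"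

lemma invariant_core_commute: "invariant_core Y s t C = invariant_core Y t s C"
  unfolding invariant_core_def by blast

lemma invariant_core_subset: "invariant_core Y s t C \<subseteq> C"
  unfolding invariant_core_def by (metis (no_types, lifting) funpow_0 mem_Collect_eq subsetI)

lemma image_invariant_core_subset:
  assumes "inverses_on Y s t"
  shows "s ` invariant_core Y s t C \<subseteq> invariant_core Y s t C"
proof clarify
  fix y assume "y \<in> invariant_core Y s t C"
  then have y: "y \<in> Y" and sC: "\<And>n. (s^^n) y \<in> C" and tC: "\<And>n. (t^^n) y \<in> C"
    unfolding invariant_core_def by auto
  have "(s^^n) (s y) \<in> C" for n
    using sC[of "Suc n"] by (simp only: funpow_Suc_right comp_apply)
  moreover have "(t^^n) (s y) \<in> C" for n
  proof (cases n)
    case 0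
    then show ?thesis using sC[of 1] by simp
  next
    case (Suc m)
    then have "(t^^n) (s y) = (t^^m) (t (s y))" by (simp only: funpow_Suc_right comp_apply)
    then show ?thesis using y tC assms unfolding inverses_on_def by simp
  qed
  ultimately show "s y \<in> invariant_core Y s t C"
    using y assms unfolding invariant_core_def inverses_on_def by simp
qed

lemma image_invariant_core:
  assumes "inverses_on Y s t"
  shows "s ` invariant_core Y s t C = invariant_core Y s t C"
proof
  show "s ` invariant_core Y s t C \<subseteq> invariant_core Y s t C"
    using image_invariant_core_subset[OF assms] .
  show "invariant_core Y s t C \<subseteq> s ` invariant_core Y s t C"
  proof
    fix y assume y: "y \<in> invariant_core Y s t C"
    then have "t y \<in> invariant_core Y s t C"
      using image_invariant_core_subset[OF inverses_on_sym[OF assms], of C]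
      by (auto simp: invariant_core_commute)
    moreover have "y = s (t y)"
      using y assms unfolding invariant_core_def inverses_on_def by simp
    ultimately show "y \<in> s ` invariant_core Y s t C" by blast
  qed
qed

lemma invariant_core_greatest:
  assumes "inverses_on Y s t" and "E \<subseteq> Y" and "s ` E = E" and "E \<subseteq> C"
  shows "E \<subseteq> invariant_core Y s t C"
proof -
  have "t ` E \<subseteq> E"
  proof clarify
    fix x assume "x \<in> E"
    then obtain x' where "x' \<in> E" "x = s x'" using \<open>s ` E = E\<close> by blast
    then show "t x \<in> E" using assms(1,2) unfolding inverses_on_def by auto
  qed
  show ?thesis
  proof
    fix x assume "x \<in> E"
    then have "(s^^n) x \<in> C \<and> (t^^n) x \<in> C" for n
      using funpow_in_invariant[of s E x n] funpow_in_invariant[of t E x n] \<open>t ` E \<subseteq> E\<close> assms(3,4)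
      by auto
    then show "x \<in> invariant_core Y s t C"
      using \<open>x \<in> E\<close> assms(2) unfolding invariant_core_def by auto
  qed
qed

lemma invariant_core_in_sets:
  assumes "sigma_algebra Y M" and "inverses_on Y s t" and "C \<in> M"
    and "\<And>A. A \<in> M \<Longrightarrow> s ` A \<in> M" and "\<And>A. A \<in> M \<Longrightarrow> t ` A \<in> M"
  shows "invariant_core Y s t C \<in> M"
proof -
  interpret sigma_algebra Y M by fact
  have "C \<subseteq> Y" using \<open>C \<in> M\<close> sets_into_space by blast
  have "invariant_core Y s t C = (\<Inter>n. (s^^n) -` C \<inter> Y \<inter> ((t^^n) -` C \<inter> Y))"
    using \<open>C \<subseteq> Y\<close> unfolding invariant_core_def by force
  also have "\<dots> = (\<Inter>n. (t^^n) ` C \<inter> (s^^n) ` C)"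
    using vimage_eq_image_inverse[OF inverses_on_funpow[OF assms(2)] \<open>C \<subseteq> Y\<close>]
      vimage_eq_image_inverse[OF inverses_on_funpow[OF inverses_on_sym[OF assms(2)]] \<open>C \<subseteq> Y\<close>]
    by simp
  also have "\<dots> \<in> M"
    using funpow_image_in_sets[of M s C] funpow_image_in_sets[of M t C] assms by auto
  finally show ?thesis .
qed

lemma sym_measure_space_inverse:
  assumes "sym_measure_space X M mu S" and "s \<in> S"
  obtains t where "t \<in> S" and "inverses_on X s t"
proof -
  obtain t where "t \<in> S" "\<forall>x\<in>X. t (s x) = x \<and> s (t x) = x"
    using assms unfolding sym_measure_space_def by blast
  moreover have "bij_betw s X X" "bij_betw t X X"
    using assms \<open>t \<in> S\<close> unfolding sym_measure_space_def by auto
  ultimately show thesis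
    using that bij_betw_apply unfolding inverses_on_def by metis
qed

lemma ms_vimage_le:
  assumes hX: "sym_measure_space X MX muX SX"
    and hY: "sym_measure_space Y MY muY SY"
    and f: "f \<in> X \<rightarrow> Y"
    and f_meas: "\<forall>B\<in>MY. f -` B \<inter> X \<in> MX \<and> muX (f -` B \<inter> X) \<le> muY B"
    and f_equiv: "\<forall>sX\<in>SX. \<exists>sY\<in>SY. \<forall>x\<in>X. sY (f x) = f (sX x)"
    and "C \<in> MY"
  shows "ms MX muX SX (f -` C \<inter> X) \<le> ms MY muY SY C"
  unfolding ms_def
proof (rule SUP_least, clarify)
  fix B assume B: "B \<subseteq> f -` C \<inter> X" "B \<in> MX" "S_symmetric SX B"
  obtain sX where sX: "sX \<in> SX" "sX ` B = B" using B(3) unfolding S_symmetric_def by blast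
  obtain sY where sY: "sY \<in> SY" "\<forall>x\<in>X. sY (f x) = f (sX x)" using f_equiv sX(1) by blast
  obtain t where t: "t \<in> SY" "inverses_on Y sY t" using sym_measure_space_inverse[OF hY sY(1)] .
  define D where "D = invariant_core Y sY t C"
  have "D \<in> MY"
    unfolding D_def using hY sY(1) t \<open>C \<in> MY\<close>
    by (intro invariant_core_in_sets) (auto simp: sym_measure_space_def gen_measure_def)
  have "D \<subseteq> C" "sY ` D = D"
    unfolding D_def by (rule invariant_core_subset, rule image_invariant_core[OF t(2)])
  then have "S_symmetric SY D" using sY(1) unfolding S_symmetric_def by blast
  have "sY ` (f ` B) = f ` (sX ` B)"
    using sY(2) B(1) by (auto simp: image_image intro!: image_cong)
  then have "sY ` (f ` B) = f ` B" using sX(2) by simp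
  then have "f ` B \<subseteq> D"
    unfolding D_def using B(1) f by (intro invariant_core_greatest[OF t(2)]) auto
  then have "B \<subseteq> f -` D \<inter> X" using B(1) by auto
  then have "muX B \<le> muX (f -` D \<inter> X)"
    using hX B(2) f_meas \<open>D \<in> MY\<close> unfolding sym_measure_space_def gen_measure_def by blast
  also have "\<dots> \<le> muY D" using f_meas \<open>D \<in> MY\<close> by blast
  also have "\<dots> \<le> (SUP B \<in> {B. B \<subseteq> C \<and> B \<in> MY \<and> S_symmetric SY B}. muY B)"
    using \<open>D \<in> MY\<close> \<open>D \<subseteq> C\<close> \<open>S_symmetric SY D\<close> by (intro SUP_upper) auto
  finally show "muX B \<le> (SUP B \<in> {B. B \<subseteq> C \<and> B \<in> MY \<and> S_symmetric SY B}. muY B)" .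
qed

lemma colour_class_in_sets:
  "col \<in> measurable_colorings Y M R \<Longrightarrow> i \<in> R \<Longrightarrow> {y\<in>Y. col y = i} \<in> M"
  unfolding measurable_colorings_def by auto

lemma colour_class_comp:
  "f \<in> X \<rightarrow> Y \<Longrightarrow> {x\<in>X. (col \<circ> f) x = i} = f -` {y\<in>Y. col y = i} \<inter> X"
  by auto

lemma measurable_colorings_comp:
  assumes col: "col \<in> measurable_colorings Y MY R" and f: "f \<in> X \<rightarrow> Y"
    and f_meas: "\<forall>B\<in>MY. f -` B \<inter> X \<in> MX"
  shows "col \<circ> f \<in> measurable_colorings X MX R"
proof -
  have "{x\<in>X. (col \<circ> f) x = i} \<in> MX" if "i \<in> R" for i
    unfolding colour_class_comp[OF f] using f_meas colour_class_in_sets[OF col that] by blast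
  moreover have "col \<circ> f \<in> X \<rightarrow> R" using col f unfolding measurable_colorings_def by auto
  ultimately show ?thesis unfolding measurable_colorings_def by auto
qed

theorem proposition3p1:
  fixes X :: "'a set" and MX :: "'a set set" and muX :: "'a set \<Rightarrow> 'v::complete_linorder"
    and SX :: "('a \<Rightarrow> 'a) set"
    and Y :: "'b set" and MY :: "'b set set" and muY :: "'b set \<Rightarrow> 'v"
    and SY :: "('b \<Rightarrow> 'b) set"
    and f :: "'a \<Rightarrow> 'b" and R :: "'c set"
  assumes "sym_measure_space X MX muX SX"
    and "sym_measure_space Y MY muY SY"
    and "f \<in> X \<rightarrow> Y"
    and "\<forall>B\<in>MY. f -` B \<inter> X \<in> MX \<and> muX (f -` B \<inter> X) \<le> muY B"
    and "\<forall>sX\<in>SX. \<exists>sY\<in>SY. \<forall>x\<in>X. sY (f x) = f (sX x)"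
  shows "ms_r X MX muX SX R \<le> ms_r Y MY muY SY R"
  unfolding ms_r_def
proof (rule INF_greatest)
  fix col assume col: "col \<in> measurable_colorings Y MY R"
  have class_le: "ms MX muX SX {x\<in>X. (col \<circ> f) x = i} \<le> ms MY muY SY {y\<in>Y. col y = i}"
    if "i \<in> R" for i
    unfolding colour_class_comp[OF assms(3)]
    by (rule ms_vimage_le[OF assms colour_class_in_sets[OF col that]])
  have "col \<circ> f \<in> measurable_colorings X MX R"
    using measurable_colorings_comp[OF col assms(3)] assms(4) by blast
  then have "(INF col \<in> measurable_colorings X MX R. SUP i \<in> R. ms MX muX SX {x\<in>X. col x = i})
      \<le> (SUP i \<in> R. ms MX muX SX {x\<in>X. (col \<circ> f) x = i})"
    by (rule INF_lower)
  also have "\<dots> \<le> (SUP i \<in> R. ms MY muY SY {y\<in>Y. col y = i})"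
    by (rule SUP_subset_mono[OF order_refl class_le])
  finally show "(INF col \<in> measurable_colorings X MX R. SUP i \<in> R. ms MX muX SX {x\<in>X. col x = i})
      \<le> (SUP i \<in> R. ms MY muY SY {y\<in>Y. col y = i})" .
qed

end
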